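(* Fix an integer $d\geq 3$ and $\rho<1$. There exist constants $C,c>0$ (depending only on $d,\rho$) such that the following holds for all sufficiently large $n$. Let $G_n$ be a $d$-regular graph on $n$ vertices whose transition matrix has all eigenvalues other than $1$ of absolute value at most $\rho$, let $v\in G_n$, and let $G$ be obtained by adding a new vertex $v'$ and the edge $\{v,v'\}$. Then for every integer $t$ with $C\log n\leq t\leq n$ and every vertex $u\neq v'$, $$\mathbb{P}_u(\tau_{v'}=t)\geq\frac{c}{n}.$$
   Context: $(X_t)$ is simple random walk on $G$, $\mathbb{P}_u$ its law with $X_0=u$, and $\tau_{v'}=\min\{t\geq1:X_t=v'\}$. *)

theory Defs
  imports Complex_Main "Jordan_Normal_Form.Char_Poly"
begin

definition regular_graph :: "nat \<Rightarrow> nat \<Rightarrow> (nat \<Rightarrow> nat \<Rightarrow> bool) \<Rightarrow> bool" where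
  "regular_graph n d E \<longleftrightarrow>
     (\<forall>x y. E x y \<longrightarrow> x < n \<and> y < n) \<and>
     (\<forall>x y. E x y \<longrightarrow> E y x) \<and>
     (\<forall>x. \<not> E x x) \<and>
     (\<forall>x<n. card {y. E x y} = d)"

definition trans_mat :: "nat \<Rightarrow> nat \<Rightarrow> (nat \<Rightarrow> nat \<Rightarrow> bool) \<Rightarrow> complex mat" where
  "trans_mat n d E = mat n n (\<lambda>(i,j). if E i j then 1 / of_nat d else 0)"

(* all eigenvalues other than (one copy of) the eigenvalue 1, counted with
   algebraic multiplicity, have absolute value at most rho *)
definition spectral_bound :: "complex mat \<Rightarrow> real \<Rightarrow> bool" where
  "spectral_bound P \<rho> \<longleftrightarrow>
     (\<exists>q. char_poly P = [:-1, 1:] * q \<and> (\<forall>z. poly q z = 0 \<longrightarrow> cmod z \<le> \<rho>))"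

(* G: G_n plus new vertex v' = n and edge {v, v'} *)
definition ext_adj :: "nat \<Rightarrow> nat \<Rightarrow> (nat \<Rightarrow> nat \<Rightarrow> bool) \<Rightarrow> nat \<Rightarrow> nat \<Rightarrow> bool" where
  "ext_adj n v E x y \<longleftrightarrow> E x y \<or> (x = v \<and> y = n) \<or> (x = n \<and> y = v)"

definition srw_prob :: "nat set \<Rightarrow> (nat \<Rightarrow> nat \<Rightarrow> bool) \<Rightarrow> nat \<Rightarrow> nat \<Rightarrow> real" where
  "srw_prob V A x y = (if A x y then 1 / real (card {z\<in>V. A x z}) else 0)"

(* first_hit V p w t u = P_u(tau_w = t), where tau_w = min {t >= 1. X_t = w}
   for the Markov chain with transition probabilities p on state space V *)
fun first_hit :: "nat set \<Rightarrow> (nat \<Rightarrow> nat \<Rightarrow> real) \<Rightarrow> nat \<Rightarrow> nat \<Rightarrow> nat \<Rightarrow> real" where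
  "first_hit V p w 0 u = 0"
| "first_hit V p w (Suc 0) u = p u w"
| "first_hit V p w (Suc (Suc k)) u = (\<Sum>x\<in>V - {w}. p u x * first_hit V p w (Suc k) x)"

end

theory Submission
  imports Defs "Jordan_Normal_Form.Spectral_Radius" "HOL-Analysis.Convex"
begin

(* HOL-Analysis (imported for Cauchy-Schwarz on finite sums) also writes \<bullet> for its inner
   product; here \<bullet> is always the scalar product of Jordan_Normal_Form vectors. *)
unbundle no inner_syntax

(* Let P be the transition matrix of the walk on the d-regular expander G_n and J the
   matrix with all entries 1/n.  The proof has a spectral half and a combinatorial half.

   Spectral half: P is stochastic and symmetric, so R = P - J satisfies P^(s+1) = J + R^(s+1),
   and the characteristic polynomials satisfy chi_R * (X - 1) = chi_P * X (a rank-one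
   determinant computation).  Hence every eigenvalue of R has modulus at most max rho 0, the
   Jordan normal form bounds the entries of R^k by c * r^k for any r > max rho 0, and, because
   R is symmetric, a Cauchy-Schwarz squaring argument removes the constant c.  So
   |P^s(x,w) - 1/n| <= r^s.

   Combinatorial half: a walk on G that has not yet hit v' is a walk on G_n which, at each
   visit of v, survives with probability a = d/(d+1).  Splitting walks to v by their number j
   of earlier visits to v, P_u(tau_v' = k+1) = (sum_j a^j g_j) / (d+1), where sum_j g_j = P^k(u,v)
   and sum_j j g_j is a renewal sum of products P^s(u,v) P^(k-s)(v,v).  The bound
   a^j >= a^M (1 - j/(M+1)) then gives P_u(tau_v' = k+1) >= a^M (P^k(u,v) - renewal/(M+1))/(d+1),
   and the mixing estimate makes P^k(u,v) about 1/n and the renewal sum O(1/n) once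
   r^k <= 1/n^2, i.e. once k >= C log n. *)


lemma mat_pow_add:
  assumes A: "(A :: 'a :: semiring_1 mat) \<in> carrier_mat n n"
  shows "A ^\<^sub>m a * A ^\<^sub>m b = A ^\<^sub>m (a + b)"
proof (induct b)
  case 0 thus ?case using A by simp
next
  case (Suc b)
  have "A ^\<^sub>m a * A ^\<^sub>m Suc b = (A ^\<^sub>m a * A ^\<^sub>m b) * A"
    by (simp, rule assoc_mult_mat[symmetric, of _ n n _ n _ n], insert A, auto)
  thus ?case using Suc by simp
qed

lemma mat_pow_Suc_left:
  assumes A: "(A :: 'a :: semiring_1 mat) \<in> carrier_mat n n"
  shows "A ^\<^sub>m Suc k = A * A ^\<^sub>m k"
  using mat_pow_add[OF A, of 1 k] A by simp

lemma symmetric_mat_pow: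
  assumes A: "(A :: 'a :: comm_semiring_1 mat) \<in> carrier_mat n n" and sym: "transpose_mat A = A"
  shows "transpose_mat (A ^\<^sub>m k) = A ^\<^sub>m k"
proof (induct k)
  case (Suc k)
  have "transpose_mat (A ^\<^sub>m Suc k) = transpose_mat A * transpose_mat (A ^\<^sub>m k)"
    by (simp, rule transpose_mult[of _ n n _ n], insert A, auto)
  thus ?case using Suc sym mat_pow_Suc_left[OF A] by simp
qed (use A in simp)

lemma smult_mat_pow:
  assumes A: "(A :: 'a :: comm_ring_1 mat) \<in> carrier_mat n n"
  shows "(c \<cdot>\<^sub>m A) ^\<^sub>m k = c ^ k \<cdot>\<^sub>m A ^\<^sub>m k"
proof (induct k)
  case 0 show ?case using A by (auto intro!: eq_matI)
next
  case (Suc k)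
  have "(c \<cdot>\<^sub>m A) ^\<^sub>m Suc k = (c ^ k \<cdot>\<^sub>m A ^\<^sub>m k) * (c \<cdot>\<^sub>m A)" using Suc by simp
  also have "\<dots> = c ^ Suc k \<cdot>\<^sub>m A ^\<^sub>m Suc k"
    using A by (auto intro!: eq_matI simp: ac_simps)
  finally show ?case .
qed


section \<open>Decay of matrix powers from the location of the eigenvalues\<close>

(* If all eigenvalues of a complex matrix lie in the open disc of radius r, its powers grow
   at most like c * r^k (Jordan normal form, via the spectral radius of A / r). *)
lemma char_poly_roots_power_decay:
  fixes A :: "complex mat"
  assumes A: "A \<in> carrier_mat n n" and n: "n > 0" and r: "r > 0"
    and roots: "\<And>z. poly (char_poly A) z = 0 \<Longrightarrow> cmod z < r"
  shows "\<exists>c. \<forall>k i j. i < n \<longrightarrow> j < n \<longrightarrow> cmod ((A ^\<^sub>m k) $$ (i,j)) \<le> c * r ^ k"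
proof -
  define B where "B = complex_of_real (1 / r) \<cdot>\<^sub>m A"
  have B: "B \<in> carrier_mat n n" using A by (simp add: B_def)
  have "spectral_radius B < 1"
  proof -
    obtain z where z: "poly (char_poly B) z = 0" "spectral_radius B = cmod z"
      using spectral_radius_mem_max(1)[OF B n] spectrum_root_char_poly[OF B] by auto
    have "char_poly B \<noteq> 0" using degree_monic_char_poly[OF B] by auto
    with z(1) have "order z (char_poly B) \<noteq> 0" using order_root by blast
    hence "order (z * complex_of_real r) (char_poly A) \<noteq> 0"
      using order_char_poly_smult[OF A, of "complex_of_real (1 / r)" z] r by (simp add: B_def)
    hence "poly (char_poly A) (z * complex_of_real r) = 0" using order_root by blast
    hence "cmod z * r < r" using roots r by (fastforce simp: norm_mult)
    thus ?thesis using z(2) r by simp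
  qed
  then obtain c where c: "\<And>k. norm_bound (B ^\<^sub>m k) c"
    using spectral_radius_jnf_norm_bound_less_1_upper_triangular[OF B] by blast
  show ?thesis
  proof (intro exI allI impI)
    fix k i j assume ij: "i < n" "j < n"
    have "(1 / r) ^ k * cmod ((A ^\<^sub>m k) $$ (i,j)) = cmod ((B ^\<^sub>m k) $$ (i,j))"
      using ij A r by (simp add: B_def smult_mat_pow norm_mult norm_power norm_divide)
    also have "\<dots> \<le> c" using c[of k] ij B unfolding norm_bound_def by simp
    finally show "cmod ((A ^\<^sub>m k) $$ (i,j)) \<le> c * r ^ k" using r by (simp add: field_simps)
  qed
qed


section \<open>Symmetric real matrices: from growth c * r^k to the sharp bound r^k\<close>

definition sq_norm_vec :: "real vec \<Rightarrow> real" where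
  "sq_norm_vec y = y \<bullet> y"

lemma sq_norm_vec_nonneg: "sq_norm_vec y \<ge> 0"
  unfolding sq_norm_vec_def scalar_prod_def by (simp add: sum_nonneg)

lemma sq_norm_vec_sum: "y \<in> carrier_vec n \<Longrightarrow> sq_norm_vec y = (\<Sum>i<n. (y $ i)\<^sup>2)"
  by (simp add: sq_norm_vec_def scalar_prod_def atLeast0LessThan power2_eq_square)

lemma scalar_prod_Cauchy_Schwarz:
  "u \<in> carrier_vec n \<Longrightarrow> w \<in> carrier_vec n \<Longrightarrow> (u \<bullet> w)\<^sup>2 \<le> sq_norm_vec u * sq_norm_vec w"
  using Cauchy_Schwarz_ineq_sum[of "\<lambda>i. u $ i" "\<lambda>i. w $ i" "{0..<n}"]
  by (simp add: sq_norm_vec_def scalar_prod_def power2_eq_square)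

lemma sq_norm_mult_mat_vec_le:
  assumes M: "M \<in> carrier_mat n n" and y: "y \<in> carrier_vec n"
    and entries: "\<And>i j. i < n \<Longrightarrow> j < n \<Longrightarrow> \<bar>M $$ (i,j)\<bar> \<le> b"
  shows "sq_norm_vec (M *\<^sub>v y) \<le> real n * (b * (\<Sum>j<n. \<bar>y $ j\<bar>))\<^sup>2"
proof -
  have entry: "\<bar>(M *\<^sub>v y) $ i\<bar> \<le> b * (\<Sum>j<n. \<bar>y $ j\<bar>)" if i: "i < n" for i
  proof -
    have "(M *\<^sub>v y) $ i = (\<Sum>j<n. M $$ (i,j) * y $ j)"
      using M y i by (simp add: scalar_prod_def atLeast0LessThan)
    also have "\<bar>\<dots>\<bar> \<le> (\<Sum>j<n. \<bar>M $$ (i,j)\<bar> * \<bar>y $ j\<bar>)"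
      by (rule sum_abs[THEN order_trans], simp add: abs_mult)
    also have "\<dots> \<le> (\<Sum>j<n. b * \<bar>y $ j\<bar>)" by (intro sum_mono mult_right_mono entries i) auto
    finally show ?thesis by (simp add: sum_distrib_left)
  qed
  have "sq_norm_vec (M *\<^sub>v y) = (\<Sum>i<n. ((M *\<^sub>v y) $ i)\<^sup>2)"
    using mult_mat_vec_carrier[OF M y] by (rule sq_norm_vec_sum)
  also have "\<dots> \<le> (\<Sum>i<n. (b * (\<Sum>j<n. \<bar>y $ j\<bar>))\<^sup>2)"
    by (intro sum_mono, metis entry abs_ge_zero power2_abs power_mono lessThan_iff)
  finally show ?thesis by simp
qed

lemma le_one_if_iterated_squares_bounded:
  fixes t :: real assumes bounded: "\<And>m. t ^ (2 ^ m) \<le> B"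
  shows "t \<le> 1"
proof (rule ccontr)
  assume "\<not> t \<le> 1"
  then obtain m where "B < t ^ m" using real_arch_pow[of t B] by auto
  also have "t ^ m \<le> t ^ (2 ^ m)"
    using \<open>\<not> t \<le> 1\<close> by (intro power_increasing) (simp_all add: less_imp_le[OF less_exp])
  finally show False using bounded[of m] by simp
qed

context
  fixes R :: "real mat" and n :: nat
  assumes R: "R \<in> carrier_mat n n" and sym: "transpose_mat R = R"
begin

(* |R^j y|^2 = <y, R^(2j) y> by symmetry, hence by Cauchy-Schwarz
   |R^j y|^4 <= |y|^2 |R^(2j) y|^2. *)
lemma sq_norm_pow_squared:
  assumes y: "y \<in> carrier_vec n"
  shows "(sq_norm_vec (R ^\<^sub>m j *\<^sub>v y))\<^sup>2 \<le> sq_norm_vec y * sq_norm_vec (R ^\<^sub>m (j + j) *\<^sub>v y)"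
proof -
  have Rj: "R ^\<^sub>m j \<in> carrier_mat n n" using R by simp
  have "sq_norm_vec (R ^\<^sub>m j *\<^sub>v y) = (transpose_mat (R ^\<^sub>m j) *\<^sub>v (R ^\<^sub>m j *\<^sub>v y)) \<bullet> y"
    unfolding sq_norm_vec_def
    by (rule transpose_vec_mult_scalar[symmetric, OF Rj y], insert Rj y, auto)
  also have "transpose_mat (R ^\<^sub>m j) *\<^sub>v (R ^\<^sub>m j *\<^sub>v y) = R ^\<^sub>m (j + j) *\<^sub>v y"
    using symmetric_mat_pow[OF R sym] mat_pow_add[OF R, of j j] Rj y
    by (simp add: assoc_mult_mat_vec[OF Rj Rj y, symmetric])
  also have "(R ^\<^sub>m (j + j) *\<^sub>v y) \<bullet> y = y \<bullet> (R ^\<^sub>m (j + j) *\<^sub>v y)"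
    using R y by (intro comm_scalar_prod[of _ n] mult_mat_vec_carrier[of _ n n]) auto
  finally show ?thesis
    using scalar_prod_Cauchy_Schwarz[OF y mult_mat_vec_carrier[OF pow_carrier_mat[OF R] y]] by simp
qed

lemma sq_norm_ratio_doubling:
  assumes y: "y \<in> carrier_vec n" and z: "sq_norm_vec y > 0"
  shows "(sq_norm_vec (R *\<^sub>v y) / sq_norm_vec y) ^ (2 ^ m)
           \<le> sq_norm_vec (R ^\<^sub>m (2 ^ m) *\<^sub>v y) / sq_norm_vec y"
proof (induct m)
  case 0 show ?case using R by simp
next
  case (Suc m)
  let ?q = "\<lambda>k. sq_norm_vec (R ^\<^sub>m k *\<^sub>v y) / sq_norm_vec y"
  have "(sq_norm_vec (R *\<^sub>v y) / sq_norm_vec y) ^ (2 ^ Suc m)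
          = ((sq_norm_vec (R *\<^sub>v y) / sq_norm_vec y) ^ (2 ^ m))\<^sup>2"
    by (simp add: power_mult[symmetric] mult.commute)
  also have "\<dots> \<le> (?q (2 ^ m))\<^sup>2"
    using Suc z by (intro power_mono zero_le_power divide_nonneg_pos sq_norm_vec_nonneg)
  also have "\<dots> \<le> ?q (2 ^ Suc m)"
    using sq_norm_pow_squared[OF y, of "2 ^ m"] z
    by (simp add: power_divide divide_le_eq power2_eq_square mult_2 field_simps)
  finally show ?case .
qed

lemma symmetric_contraction:
  assumes growth: "\<And>k i j. i < n \<Longrightarrow> j < n \<Longrightarrow> \<bar>(R ^\<^sub>m k) $$ (i,j)\<bar> \<le> c * r ^ k"
    and r: "r > 0" and y: "y \<in> carrier_vec n"
  shows "sq_norm_vec (R *\<^sub>v y) \<le> r\<^sup>2 * sq_norm_vec y"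
proof (cases "sq_norm_vec y = 0")
  case True
  hence "(sq_norm_vec (R *\<^sub>v y))\<^sup>2 \<le> 0" using sq_norm_pow_squared[OF y, of 1] R by simp
  thus ?thesis using True by simp
next
  case False
  define z where "z = sq_norm_vec y"
  define K where "K = real n * (c * (\<Sum>j<n. \<bar>y $ j\<bar>))\<^sup>2"
  have z: "z > 0" using False sq_norm_vec_nonneg[of y] unfolding z_def by simp
  have "(sq_norm_vec (R *\<^sub>v y) / z / r\<^sup>2) ^ (2 ^ m) \<le> K / z" for m
  proof -
    have "(sq_norm_vec (R *\<^sub>v y) / z / r\<^sup>2) ^ (2 ^ m)
            = (sq_norm_vec (R *\<^sub>v y) / z) ^ (2 ^ m) / (r ^ 2 ^ m)\<^sup>2"
      by (simp only: power_divide) (simp add: power_mult[symmetric] mult.commute)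
    also have "\<dots> \<le> sq_norm_vec (R ^\<^sub>m (2 ^ m) *\<^sub>v y) / z / (r ^ 2 ^ m)\<^sup>2"
      using sq_norm_ratio_doubling[OF y z[unfolded z_def]] unfolding z_def
      by (rule divide_right_mono) simp
    also have "\<dots> \<le> K * (r ^ 2 ^ m)\<^sup>2 / z / (r ^ 2 ^ m)\<^sup>2"
      using sq_norm_mult_mat_vec_le[of "R ^\<^sub>m (2 ^ m)" n y "c * r ^ 2 ^ m"] growth R y z
      by (intro divide_right_mono) (auto simp: K_def power_mult_distrib mult_ac)
    also have "\<dots> = K / z" using r by simp
    finally show ?thesis .
  qed
  hence "sq_norm_vec (R *\<^sub>v y) / z / r\<^sup>2 \<le> 1" by (rule le_one_if_iterated_squares_bounded)
  thus ?thesis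
    using z r unfolding z_def by (simp add: divide_divide_eq_left pos_divide_le_eq mult.commute)
qed

lemma symmetric_pow_entry_bound:
  assumes growth: "\<And>k i j. i < n \<Longrightarrow> j < n \<Longrightarrow> \<bar>(R ^\<^sub>m k) $$ (i,j)\<bar> \<le> c * r ^ k"
    and r: "r > 0" and i: "i < n" and j: "j < n"
  shows "\<bar>(R ^\<^sub>m s) $$ (i,j)\<bar> \<le> r ^ s"
proof -
  have iterate: "sq_norm_vec (R ^\<^sub>m s *\<^sub>v y) \<le> (r\<^sup>2) ^ s * sq_norm_vec y"
    if "y \<in> carrier_vec n" for y
    using that
  proof (induct s arbitrary: y)
    case (Suc s)
    have "R ^\<^sub>m Suc s *\<^sub>v y = R ^\<^sub>m s *\<^sub>v (R *\<^sub>v y)"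
      using R Suc by (simp add: assoc_mult_mat_vec[of _ n n _ n])
    hence "sq_norm_vec (R ^\<^sub>m Suc s *\<^sub>v y) \<le> (r\<^sup>2) ^ s * sq_norm_vec (R *\<^sub>v y)"
      using Suc R by simp
    also have "\<dots> \<le> (r\<^sup>2) ^ s * (r\<^sup>2 * sq_norm_vec y)"
      using r by (intro mult_left_mono symmetric_contraction[OF growth r Suc(2)]) auto
    finally show ?case by (simp add: ac_simps)
  qed (use R in simp)
  let ?e = "unit_vec n j"
  have "((R ^\<^sub>m s) $$ (i,j))\<^sup>2 = ((R ^\<^sub>m s *\<^sub>v ?e) $ i)\<^sup>2" using R i j by simp
  also have "\<dots> \<le> (\<Sum>l<n. ((R ^\<^sub>m s *\<^sub>v ?e) $ l)\<^sup>2)"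
    by (rule member_le_sum) (use i in auto)
  also have "\<dots> = sq_norm_vec (R ^\<^sub>m s *\<^sub>v ?e)"
    using mult_mat_vec_carrier[OF pow_carrier_mat[OF R] unit_vec_carrier]
    by (rule sq_norm_vec_sum[symmetric])
  also have "\<dots> \<le> (r ^ s)\<^sup>2"
    using iterate[of ?e] j
    by (simp add: sq_norm_vec_def power_mult[symmetric] mult.commute power_even_eq)
  finally show ?thesis using r by (simp add: abs_le_square_iff[symmetric])
qed

end


section \<open>Removing the eigenvalue 1 of a stochastic matrix\<close>

definition uniform_mat :: "nat \<Rightarrow> 'a :: field mat" where
  "uniform_mat n = mat n n (\<lambda>_. 1 / of_nat n)"

lemma uniform_mat_dims[simp]: "dim_row (uniform_mat n) = n" "dim_col (uniform_mat n) = n"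
  by (simp_all add: uniform_mat_def)

lemma uniform_mat_carrier[simp]: "uniform_mat n \<in> carrier_mat n n"
  by (simp add: uniform_mat_def)

lemma uniform_mat_idem:
  "n > 0 \<Longrightarrow> uniform_mat n * uniform_mat n = (uniform_mat n :: 'a :: field_char_0 mat)"
  by (rule eq_matI, auto simp: uniform_mat_def scalar_prod_def)

(* Rank-one determinant: det (I + g J) = 1 + g, since J has rank one and trace one. *)
lemma det_one_plus_uniform:
  fixes g :: "'a :: field_char_0"
  assumes n: "n > 0"
  shows "det (1\<^sub>m n + g \<cdot>\<^sub>m uniform_mat n) = 1 + g"
proof -
  define K where "K = 1\<^sub>m n + g \<cdot>\<^sub>m uniform_mat n"
  (* adding all columns to the first one, then subtracting the first row from the others,
     turns K into an upper triangular matrix with diagonal 1 + g, 1, ..., 1 *)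
  define U where "U = mat n n (\<lambda>(i,j). if j = 0 then 1 else if i = j then 1 else (0::'a))"
  define L where
    "L = mat n n (\<lambda>(i,j). (if i = j then 1 else 0) - (if j = 0 \<and> i \<noteq> 0 then 1 else (0::'a)))"
  define T where "T = mat n n (\<lambda>(i,j). if i = 0 then (if j = 0 then 1 + g else g / of_nat n)
                                     else if i = j then 1 else (0::'a))"
  have K: "K \<in> carrier_mat n n" and U: "U \<in> carrier_mat n n" and L: "L \<in> carrier_mat n n"
    unfolding K_def U_def L_def by auto
  have Kij: "K $$ (i,j) = (if i = j then 1 else 0) + g / of_nat n" if "i < n" "j < n" for i j
    using that by (simp add: K_def uniform_mat_def)
  have KU: "(K * U) $$ (i,j) = (if j = 0 then 1 + g else K $$ (i,j))" if "i < n" "j < n" for i j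
  proof -
    have "(K * U) $$ (i,j) = (\<Sum>l<n. K $$ (i,l) * U $$ (l,j))"
      using that K U by (simp add: scalar_prod_def atLeast0LessThan)
    also have "\<dots> = (if j = 0 then (\<Sum>l<n. K $$ (i,l)) else K $$ (i,j))"
    proof (cases "j = 0")
      case True thus ?thesis by (auto simp: U_def intro!: sum.cong)
    next
      case False
      hence "(\<Sum>l<n. K $$ (i,l) * U $$ (l,j)) = (\<Sum>l<n. if l = j then K $$ (i,j) else 0)"
        using that by (intro sum.cong) (auto simp: U_def)
      thus ?thesis using False that by simp
    qed
    also have "(\<Sum>l<n. K $$ (i,l)) = (\<Sum>l<n. (if l = i then 1 else 0) + g / of_nat n)"
      using that by (intro sum.cong) (auto simp: Kij)
    also have "\<dots> = 1 + g" using that n by (simp add: sum.distrib)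
    finally show ?thesis .
  qed
  have LKU: "L * (K * U) = T"
  proof (rule eq_matI)
    fix i j assume "i < dim_row T" "j < dim_col T"
    hence ij: "i < n" "j < n" by (auto simp: T_def)
    have "(L * (K * U)) $$ (i,j) = (\<Sum>l<n. L $$ (i,l) * (K * U) $$ (l,j))"
      using ij L K U by (simp add: scalar_prod_def atLeast0LessThan)
    also have "\<dots> = (K * U) $$ (i,j) - (if i \<noteq> 0 then (K * U) $$ (0,j) else 0)"
      using ij
      by (simp add: L_def left_diff_distrib sum_subtractf if_distrib[of "\<lambda>x. x * _"] cong: if_cong)
    also have "\<dots> = T $$ (i,j)" using ij n by (auto simp: KU Kij T_def)
    finally show "(L * (K * U)) $$ (i,j) = T $$ (i,j)" .
  qed (use L K U in \<open>auto simp: T_def\<close>)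
  have "det L = 1"
    using det_lower_triangular[of n L] L
    by (auto simp: L_def prod_list_diag_prod intro!: prod.neutral)
  moreover have "det U = 1"
    using det_lower_triangular[of n U] U
    by (auto simp: U_def prod_list_diag_prod intro!: prod.neutral)
  moreover have "det T = 1 + g"
  proof -
    have T: "T \<in> carrier_mat n n" by (simp add: T_def)
    have "det T = (\<Prod>i\<in>{0..<n}. T $$ (i,i))"
      using det_upper_triangular[OF _ T] T
      by (simp add: T_def upper_triangular_def prod_list_diag_prod)
    also have "\<dots> = (\<Prod>i\<in>{0..<n}. if i = 0 then 1 + g else 1)"
      by (rule prod.cong) (auto simp: T_def)
    finally show ?thesis using n by simp
  qed
  moreover have "det T = det L * (det K * det U)"
    unfolding LKU[symmetric] using K U L
    by (simp add: det_mult[OF L mult_carrier_mat[OF K U]] det_mult[OF K U])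
  ultimately have "det K = 1 + g" by simp
  thus ?thesis unfolding K_def .
qed

(* Deflation: for a stochastic matrix P, the characteristic polynomial of P - J arises from
   that of P by replacing one root 1 by a root 0. *)
lemma char_poly_deflation:
  fixes P :: "complex mat"
  assumes P: "P \<in> carrier_mat n n" and n: "n > 0"
    and stochastic: "\<And>i. i < n \<Longrightarrow> (\<Sum>l<n. P $$ (i,l)) = 1"
  shows "char_poly (P - uniform_mat n) * [:-1, 1:] = char_poly P * [:0, 1:]"
proof -
  have pointwise: "poly (char_poly (P - uniform_mat n)) x * (x - 1) = poly (char_poly P) x * x"
    if x: "x \<noteq> 1" for x
  proof -
    define B where "B = - char_matrix P x"
    define K where "K = 1\<^sub>m n + (1 / (x - 1)) \<cdot>\<^sub>m (uniform_mat n :: complex mat)"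
    have B: "B \<in> carrier_mat n n" using P by (simp add: B_def)
    have row_B: "(\<Sum>l<n. B $$ (i,l)) = x - 1" if i: "i < n" for i
    proof -
      have "(\<Sum>l<n. B $$ (i,l)) = (\<Sum>l<n. (if i = l then x else 0) - P $$ (i,l))"
        using i P by (intro sum.cong) (auto simp: B_def char_matrix_def)
      thus ?thesis using i stochastic[OF i] by (simp add: sum_subtractf)
    qed
    have "- char_matrix (P - uniform_mat n) x = B * K"
    proof (rule eq_matI)
      fix i j assume "i < dim_row (B * K)" "j < dim_col (B * K)"
      hence ij: "i < n" "j < n" using B by (auto simp: K_def)
      have "(B * K) $$ (i,j) = (\<Sum>l<n. B $$ (i,l) * K $$ (l,j))"
        using ij B by (simp add: K_def scalar_prod_def atLeast0LessThan)
      also have "\<dots> = (\<Sum>l<n. (if l = j then B $$ (i,l) else 0)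
                                + B $$ (i,l) * (1 / (x - 1) / of_nat n))"
        using ij by (intro sum.cong) (auto simp: K_def uniform_mat_def distrib_left)
      also have "\<dots> = B $$ (i,j) + (\<Sum>l<n. B $$ (i,l)) / (x - 1) / of_nat n"
        using ij by (simp add: sum.distrib sum_divide_distrib)
      also have "\<dots> = (- char_matrix (P - uniform_mat n) x) $$ (i,j)"
        using ij x P
        by (simp only: row_B[OF ij(1)]) (simp add: B_def char_matrix_def uniform_mat_def)
      finally show "(- char_matrix (P - uniform_mat n) x) $$ (i,j) = (B * K) $$ (i,j)" ..
    qed (use B P in \<open>auto simp: K_def char_matrix_def\<close>)
    hence "poly (char_poly (P - uniform_mat n)) x = det (B * K)"
      by (simp add: char_poly_matrix[OF minus_carrier_mat[OF uniform_mat_carrier]])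
    also have "\<dots> = det B * det K" using B by (intro det_mult[of _ n]) (auto simp: K_def)
    also have "det K = 1 + 1 / (x - 1)" unfolding K_def by (rule det_one_plus_uniform[OF n])
    also have "det B = poly (char_poly P) x"
      unfolding B_def by (rule char_poly_matrix[OF P, symmetric])
    finally show ?thesis using x by (simp add: field_simps)
  qed
  define p where "p = char_poly (P - uniform_mat n) * [:-1, 1:] - char_poly P * [:0, 1:]"
  have roots: "UNIV - {1} \<subseteq> {x. poly p x = 0}" using pointwise by (auto simp: p_def algebra_simps)
  have "p = 0"
  proof (rule ccontr)
    assume "p \<noteq> 0"
    hence "finite (UNIV - {1::complex})" using roots poly_roots_finite finite_subset by blast
    thus False using infinite_UNIV_char_0[where 'a = complex] by simp
  qed
  thus ?thesis unfolding p_def by simp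
qed


(* The transition matrix of simple random walk on a d-regular graph, over any field; over the
   complex numbers it is the matrix trans_mat of the statement. *)
definition walk_mat :: "nat \<Rightarrow> nat \<Rightarrow> (nat \<Rightarrow> nat \<Rightarrow> bool) \<Rightarrow> 'a :: field mat" where
  "walk_mat n d E = mat n n (\<lambda>(i,j). if E i j then 1 / of_nat d else 0)"

lemma walk_mat_dims[simp]: "dim_row (walk_mat n d E) = n" "dim_col (walk_mat n d E) = n"
  by (simp_all add: walk_mat_def)

lemma walk_mat_carrier[simp]: "walk_mat n d E \<in> carrier_mat n n"
  by (simp add: walk_mat_def)

lemma deviation_carrier[simp]: "walk_mat n d E - uniform_mat n \<in> carrier_mat n n"
  by (rule minus_carrier_mat) simp

lemma trans_mat_eq_walk_mat: "trans_mat n d E = walk_mat n d E"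
  unfolding trans_mat_def walk_mat_def ..

lemma deviation_of_real:
  "of_real_hom.mat_hom (walk_mat n d E - uniform_mat n)
     = (walk_mat n d E - uniform_mat n :: complex mat)"
  by (rule eq_matI) (auto simp: walk_mat_def uniform_mat_def)

definition walk_kernel :: "nat \<Rightarrow> (nat \<Rightarrow> nat \<Rightarrow> bool) \<Rightarrow> nat \<Rightarrow> nat \<Rightarrow> real" where
  "walk_kernel d E x y = (if E x y then 1 / real d else 0)"

lemma walk_mat_kernel:
  "x < n \<Longrightarrow> y < n \<Longrightarrow> (walk_mat n d E :: real mat) $$ (x,y) = walk_kernel d E x y"
  by (simp add: walk_mat_def walk_kernel_def)

context
  fixes n d E assumes reg: "regular_graph n d E" and d: "d > 0"
begin

(* P is doubly stochastic: each vertex has d neighbours, and adjacency is symmetric. *)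
lemma walk_mat_row_sum:
  assumes i: "i < n"
  shows "(\<Sum>l<n. (walk_mat n d E :: 'a :: field_char_0 mat) $$ (i,l)) = 1"
proof -
  have "{l \<in> {..<n}. E i l} = {y. E i y}" using reg by (auto simp: regular_graph_def)
  hence "card {l \<in> {..<n}. E i l} = d" using reg i by (simp add: regular_graph_def)
  moreover have "(\<Sum>l<n. (walk_mat n d E :: 'a mat) $$ (i,l))
                   = (\<Sum>l<n. if E i l then 1 / of_nat d else 0)"
    using i by (intro sum.cong) (auto simp: walk_mat_def)
  ultimately show ?thesis using d by (simp add: sum.inter_filter[symmetric])
qed

lemma walk_mat_col_sum:
  assumes j: "j < n"
  shows "(\<Sum>l<n. (walk_mat n d E :: 'a :: field_char_0 mat) $$ (l,j)) = 1"
proof -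
  have "(\<Sum>l<n. (walk_mat n d E :: 'a mat) $$ (l,j))
          = (\<Sum>l<n. (walk_mat n d E :: 'a mat) $$ (j,l))"
    using j reg by (intro sum.cong) (auto simp: walk_mat_def regular_graph_def)
  thus ?thesis using walk_mat_row_sum[OF j] by simp
qed

lemma walk_mat_uniform: "walk_mat n d E * uniform_mat n = (uniform_mat n :: 'a :: field_char_0 mat)"
proof (rule eq_matI)
  fix i j assume "i < dim_row (uniform_mat n :: 'a mat)" "j < dim_col (uniform_mat n :: 'a mat)"
  hence ij: "i < n" "j < n" by (simp_all add: uniform_mat_def)
  have "(walk_mat n d E * uniform_mat n) $$ (i,j)
          = (\<Sum>l<n. (walk_mat n d E :: 'a mat) $$ (i,l)) / of_nat n"
    using ij by (simp add: scalar_prod_def atLeast0LessThan sum_divide_distrib uniform_mat_def)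
  thus "(walk_mat n d E * uniform_mat n) $$ (i,j) = (uniform_mat n :: 'a mat) $$ (i,j)"
    using ij by (simp add: walk_mat_row_sum uniform_mat_def)
qed auto

lemma uniform_walk_mat: "uniform_mat n * walk_mat n d E = (uniform_mat n :: 'a :: field_char_0 mat)"
proof (rule eq_matI)
  fix i j assume "i < dim_row (uniform_mat n :: 'a mat)" "j < dim_col (uniform_mat n :: 'a mat)"
  hence ij: "i < n" "j < n" by simp_all
  have "(uniform_mat n * walk_mat n d E) $$ (i,j)
          = (\<Sum>l<n. (walk_mat n d E :: 'a mat) $$ (l,j)) / of_nat n"
    using ij by (simp add: scalar_prod_def atLeast0LessThan sum_divide_distrib uniform_mat_def)
  thus "(uniform_mat n * walk_mat n d E) $$ (i,j) = (uniform_mat n :: 'a mat) $$ (i,j)"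
    using ij by (simp add: walk_mat_col_sum uniform_mat_def)
qed auto

lemma walk_mat_pow_Suc:
  assumes n: "n > 0"
  shows "(walk_mat n d E :: 'a :: field_char_0 mat) ^\<^sub>m Suc s
           = uniform_mat n + (walk_mat n d E - uniform_mat n) ^\<^sub>m Suc s"
proof (induct s)
  case 0 show ?case by (rule eq_matI) (auto simp: walk_mat_def uniform_mat_def)
next
  case (Suc s)
  let ?P = "walk_mat n d E :: 'a mat" and ?J = "uniform_mat n :: 'a mat"
  let ?R = "?P - ?J" and ?Rs = "(?P - ?J) ^\<^sub>m Suc s"
  have Rs: "?Rs \<in> carrier_mat n n" and R: "?R \<in> carrier_mat n n" by auto
  have RsJ: "?Rs * ?J = 0\<^sub>m n n"
  proof -
    have "?R * ?J = 0\<^sub>m n n"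
      by (simp add: minus_mult_distrib_mat[of _ n n _ _ n] walk_mat_uniform uniform_mat_idem[OF n]
          minus_r_inv_mat[OF uniform_mat_carrier])
    moreover have "?Rs * ?J = (?R ^\<^sub>m s) * (?R * ?J)"
      using R by (simp add: assoc_mult_mat[of _ n n _ n _ n])
    ultimately show ?thesis using R by simp
  qed
  have "?P ^\<^sub>m Suc (Suc s) = (?J + ?Rs) * ?P" using Suc by simp
  also have "\<dots> = ?J * ?P + ?Rs * ?P"
    using Rs by (intro add_mult_distrib_mat[where nr = n and n = n and nc = n]) auto
  also have "?Rs * ?P = ?Rs * (?R + ?J)"
    by (rule arg_cong[where f = "\<lambda>X. ?Rs * X"]) (rule eq_matI, auto)
  also have "\<dots> = ?Rs * ?R + ?Rs * ?J" using Rs by (intro mult_add_distrib_mat[of _ n n _ n]) auto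
  also have "?J * ?P = ?J" by (rule uniform_walk_mat)
  also have "?Rs * ?J = 0\<^sub>m n n" by (rule RsJ)
  also have "?Rs * ?R + 0\<^sub>m n n = ?R ^\<^sub>m Suc (Suc s)" using Rs by simp
  finally show ?case .
qed

end

lemma deviation_eigenvalues:
  assumes reg: "regular_graph n d E" and d: "d > 0" and n: "n > 0"
    and gap: "spectral_bound (trans_mat n d E) \<rho>"
    and root: "poly (char_poly (walk_mat n d E - uniform_mat n :: complex mat)) z = 0"
  shows "cmod z \<le> max \<rho> 0"
proof -
  from gap obtain q where q: "char_poly (walk_mat n d E :: complex mat) = [:-1, 1:] * q"
    and q_roots: "\<And>z. poly q z = 0 \<Longrightarrow> cmod z \<le> \<rho>"
    unfolding spectral_bound_def trans_mat_eq_walk_mat by blast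
  have "char_poly (walk_mat n d E - uniform_mat n :: complex mat) * [:-1, 1:]
          = (q * [:0, 1:]) * [:-1, 1:]"
    using char_poly_deflation[OF walk_mat_carrier n walk_mat_row_sum[OF reg d]] q
    by (simp add: ac_simps)
  hence "char_poly (walk_mat n d E - uniform_mat n :: complex mat) = q * [:0, 1:]"
    by (rule mult_right_cancel[THEN iffD1, rotated]) simp
  hence "poly q z * z = 0" using root by auto
  thus ?thesis using q_roots by fastforce
qed

theorem walk_mat_mixing:
  assumes reg: "regular_graph n d E" and d: "d > 0" and n: "n > 0"
    and gap: "spectral_bound (trans_mat n d E) \<rho>" and r: "max \<rho> 0 < r"
    and x: "x < n" and w: "w < n"
  shows "\<bar>(walk_mat n d E ^\<^sub>m s) $$ (x,w) - 1 / real n\<bar> \<le> r ^ s"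
proof -
  let ?R = "walk_mat n d E - uniform_mat n :: real mat"
  have R: "?R \<in> carrier_mat n n" by simp
  have r0: "r > 0" using r by simp
  obtain c where c: "\<And>k i j. i < n \<Longrightarrow> j < n \<Longrightarrow>
                       cmod ((of_real_hom.mat_hom ?R ^\<^sub>m k) $$ (i,j)) \<le> c * r ^ k"
    using char_poly_roots_power_decay[of "of_real_hom.mat_hom ?R" n r] n r0
      deviation_eigenvalues[OF reg d n gap] r by (fastforce simp: deviation_of_real)
  have growth: "\<bar>(?R ^\<^sub>m k) $$ (i,j)\<bar> \<le> c * r ^ k" if "i < n" "j < n" for k i j
    using c[OF that, of k] that by (simp add: of_real_hom.mat_hom_pow[OF R, symmetric])
  have sym: "transpose_mat ?R = ?R"
    using reg by (intro eq_matI) (auto simp: walk_mat_def uniform_mat_def regular_graph_def)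
  show ?thesis
  proof (cases s)
    case 0 thus ?thesis using x w n by simp
  next
    case (Suc s')
    have "(walk_mat n d E ^\<^sub>m s) $$ (x,w) = 1 / real n + (?R ^\<^sub>m s) $$ (x,w)"
      using x w unfolding Suc walk_mat_pow_Suc[OF reg d n] by (simp add: uniform_mat_def)
    thus ?thesis using symmetric_pow_entry_bound[OF R sym growth r0 x w, of s] by simp
  qed
qed


section \<open>Decomposing walks by their visits to a vertex\<close>

fun reach_prob :: "(nat \<Rightarrow> nat \<Rightarrow> real) \<Rightarrow> nat \<Rightarrow> nat \<Rightarrow> nat \<Rightarrow> nat \<Rightarrow> real" where
  "reach_prob P n v 0 x = (if x = v then 1 else 0)"
| "reach_prob P n v (Suc k) x = (\<Sum>y<n. P x y * reach_prob P n v k y)"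

(* reach_visits P n v j k x: the part of reach_prob P n v k x coming from paths that visit v
   exactly j times at times 0, ..., k - 1. *)
fun reach_visits :: "(nat \<Rightarrow> nat \<Rightarrow> real) \<Rightarrow> nat \<Rightarrow> nat \<Rightarrow> nat \<Rightarrow> nat \<Rightarrow> nat \<Rightarrow> real" where
  "reach_visits P n v j 0 x = (if j = 0 \<and> x = v then 1 else 0)"
| "reach_visits P n v j (Suc k) x =
     (if x = v then (case j of 0 \<Rightarrow> 0 | Suc j' \<Rightarrow> (\<Sum>y<n. P x y * reach_visits P n v j' k y))
      else (\<Sum>y<n. P x y * reach_visits P n v j k y))"

(* discounted_reach P n v a k x: paths from x to v of length k, each weighted by a to the
   number of its visits to v before time k. *)
fun discounted_reach :: "(nat \<Rightarrow> nat \<Rightarrow> real) \<Rightarrow> nat \<Rightarrow> nat \<Rightarrow> real \<Rightarrow> nat \<Rightarrow> nat \<Rightarrow> real" where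
  "discounted_reach P n v a 0 x = (if x = v then 1 else 0)"
| "discounted_reach P n v a (Suc k) x =
     (if x = v then a else 1) * (\<Sum>y<n. P x y * discounted_reach P n v a k y)"

(* Unfolding reach_prob automatically would interfere with the sum manipulations below. *)
declare reach_prob.simps(2)[simp del]

lemma reach_prob_mat_pow:
  assumes A: "A \<in> carrier_mat n n"
    and kernel: "\<And>x y. x < n \<Longrightarrow> y < n \<Longrightarrow> P x y = A $$ (x,y)"
    and v: "v < n" and x: "x < n"
  shows "reach_prob P n v s x = (A ^\<^sub>m s) $$ (x,v)"
  using x
proof (induct s arbitrary: x)
  case (Suc s)
  have "(A ^\<^sub>m Suc s) $$ (x,v) = (\<Sum>y<n. A $$ (x,y) * (A ^\<^sub>m s) $$ (y,v))"
    unfolding mat_pow_Suc_left[OF A] using A v Suc.prems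
    by (simp add: scalar_prod_def atLeast0LessThan)
  thus ?case using Suc kernel by (simp add: reach_prob.simps(2))
qed (use A v in simp)

context fixes P :: "nat \<Rightarrow> nat \<Rightarrow> real" and n v :: nat
begin

lemma reach_visits_too_many: "k < j \<Longrightarrow> reach_visits P n v j k x = 0"
proof (induct k arbitrary: j x)
  case (Suc k) thus ?case by (cases j) auto
qed simp

lemma reach_visits_nonneg: "(\<And>x y. P x y \<ge> 0) \<Longrightarrow> reach_visits P n v j k x \<ge> 0"
  by (induct k arbitrary: j x) (auto split: nat.split intro!: sum_nonneg)

lemma reach_visits_step_away:
  assumes "x \<noteq> v"
  shows "(\<Sum>j\<le>Suc k. h j * reach_visits P n v j (Suc k) x)
           = (\<Sum>y<n. P x y * (\<Sum>j\<le>k. h j * reach_visits P n v j k y))"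
proof -
  have "(\<Sum>j\<le>Suc k. h j * reach_visits P n v j (Suc k) x)
          = (\<Sum>y<n. \<Sum>j\<le>Suc k. P x y * (h j * reach_visits P n v j k y))"
    using assms by (simp add: sum_distrib_left ac_simps sum.swap[of _ _ "{..<n}"])
  also have "\<dots> = (\<Sum>y<n. P x y * (\<Sum>j\<le>k. h j * reach_visits P n v j k y))"
    by (simp add: sum_distrib_left[symmetric] reach_visits_too_many)
  finally show ?thesis .
qed

lemma reach_visits_step_at:
  "(\<Sum>j\<le>Suc k. h j * reach_visits P n v j (Suc k) v)
     = (\<Sum>y<n. P v y * (\<Sum>j\<le>k. h (Suc j) * reach_visits P n v j k y))"
proof -
  have "(\<Sum>j\<le>Suc k. h j * reach_visits P n v j (Suc k) v)
          = (\<Sum>j\<le>k. h (Suc j) * reach_visits P n v (Suc j) (Suc k) v)"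
    by (simp only: sum.atMost_Suc_shift) simp
  also have "\<dots> = (\<Sum>j\<le>k. \<Sum>y<n. P v y * (h (Suc j) * reach_visits P n v j k y))"
    by (simp add: sum_distrib_left ac_simps)
  finally show ?thesis by (simp add: sum.swap[of _ "{..k}"] sum_distrib_left)
qed

lemma reach_visits_sum: "(\<Sum>j\<le>k. reach_visits P n v j k x) = reach_prob P n v k x"
proof (induct k arbitrary: x)
  case (Suc k) thus ?case
    using reach_visits_step_away[of x "\<lambda>_. 1" k] reach_visits_step_at[of "\<lambda>_. 1" k]
    by (cases "x = v") (simp_all add: reach_prob.simps(2))
qed simp

lemma reach_visits_mean:
  "(\<Sum>j\<le>k. real j * reach_visits P n v j k x)
     = (\<Sum>s<k. reach_prob P n v s x * reach_prob P n v (k - s) v)"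
proof (induct k arbitrary: x)
  case (Suc k)
  have inner: "(\<Sum>s<k. reach_prob P n v (Suc s) x * reach_prob P n v (k - s) v)
      = (\<Sum>y<n. P x y * (\<Sum>s<k. reach_prob P n v s y * reach_prob P n v (k - s) v))"
    by (simp add: reach_prob.simps(2) sum_distrib_left sum_distrib_right ac_simps
        sum.swap[of _ "{..<k}"])
  have shift: "(\<Sum>s<Suc k. reach_prob P n v s x * reach_prob P n v (Suc k - s) v)
      = reach_prob P n v 0 x * reach_prob P n v (Suc k) v
        + (\<Sum>y<n. P x y * (\<Sum>s<k. reach_prob P n v s y * reach_prob P n v (k - s) v))"
    by (subst sum.lessThan_Suc_shift) (simp add: inner)
  show ?case
  proof (cases "x = v")
    case True
    have "(\<Sum>j\<le>Suc k. real j * reach_visits P n v j (Suc k) x)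
        = (\<Sum>y<n. P v y * ((\<Sum>j\<le>k. real j * reach_visits P n v j k y)
                            + (\<Sum>j\<le>k. reach_visits P n v j k y)))"
      using reach_visits_step_at[of real k] True by (simp add: sum.distrib algebra_simps)
    also have "\<dots> = (\<Sum>y<n. P v y * (\<Sum>s<k. reach_prob P n v s y * reach_prob P n v (k - s) v))
                      + reach_prob P n v (Suc k) v"
      by (simp add: Suc reach_visits_sum distrib_left sum.distrib reach_prob.simps(2))
    finally show ?thesis using True shift by simp
  next
    case False thus ?thesis using reach_visits_step_away[of x real k] Suc shift by simp
  qed
qed simp

lemma discounted_reach_visits:
  "discounted_reach P n v a k x = (\<Sum>j\<le>k. a ^ j * reach_visits P n v j k x)"
proof (induct k arbitrary: x)
  case (Suc k) thus ?case
    using reach_visits_step_away[of x "\<lambda>j. a ^ j" k] reach_visits_step_at[of "\<lambda>j. a ^ j" k]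
    by (cases "x = v") (simp_all add: sum_distrib_left ac_simps)
qed simp

end

lemma power_linear_minorant:
  fixes a :: real assumes a: "0 < a" "a \<le> 1"
  shows "a ^ M * (1 - real j / (real M + 1)) \<le> a ^ j"
proof (cases "j \<le> M")
  case True
  have "a ^ M * (1 - real j / (real M + 1)) \<le> a ^ M" using a by (simp add: mult_left_le)
  also have "\<dots> \<le> a ^ j" using True a by (intro power_decreasing) auto
  finally show ?thesis .
next
  case False
  hence "1 - real j / (real M + 1) \<le> 0" by (simp add: field_simps)
  hence "a ^ M * (1 - real j / (real M + 1)) \<le> 0" using a by (simp add: mult_nonneg_nonpos)
  also have "0 \<le> a ^ j" using a by simp
  finally show ?thesis .
qed

lemma discounted_reach_lower:
  assumes P: "\<And>x y. P x y \<ge> 0" and a: "0 < a" "a \<le> 1"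
  shows "a ^ M * (reach_prob P n v k x
           - (\<Sum>s<k. reach_prob P n v s x * reach_prob P n v (k - s) v) / (real M + 1))
         \<le> discounted_reach P n v a k x"
proof -
  have "a ^ M * (reach_prob P n v k x
           - (\<Sum>s<k. reach_prob P n v s x * reach_prob P n v (k - s) v) / (real M + 1))
      = (\<Sum>j\<le>k. a ^ M * (1 - real j / (real M + 1)) * reach_visits P n v j k x)"
  proof -
    have "reach_prob P n v k x
            - (\<Sum>s<k. reach_prob P n v s x * reach_prob P n v (k - s) v) / (real M + 1)
        = (\<Sum>j\<le>k. reach_visits P n v j k x)
            - (\<Sum>j\<le>k. real j * reach_visits P n v j k x) / (real M + 1)"
      by (simp only: reach_visits_sum reach_visits_mean)
    also have "\<dots> = (\<Sum>j\<le>k. (1 - real j / (real M + 1)) * reach_visits P n v j k x)"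
      by (simp add: algebra_simps sum_subtractf sum_divide_distrib)
    finally show ?thesis by (simp add: sum_distrib_left ac_simps)
  qed
  also have "\<dots> \<le> (\<Sum>j\<le>k. a ^ j * reach_visits P n v j k x)"
    by (intro sum_mono mult_right_mono power_linear_minorant a reach_visits_nonneg P)
  finally show ?thesis by (simp add: discounted_reach_visits)
qed


section \<open>The walk on the graph with a pendant vertex\<close>

context
  fixes n d E v assumes reg: "regular_graph n d E" and d: "d > 0" and v: "v < n"
begin

lemma ext_degree:
  assumes x: "x < n"
  shows "card {z \<in> {0..n}. ext_adj n v E x z} = (if x = v then d + 1 else d)"
proof -
  have nbrs: "{z. E x z} \<subseteq> {..<n}" using reg by (auto simp: regular_graph_def)
  have "{z \<in> {0..n}. ext_adj n v E x z} = (if x = v then insert n {z. E x z} else {z. E x z})"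
    using nbrs x v by (auto simp: ext_adj_def)
  moreover have "finite {z. E x z}" "n \<notin> {z. E x z}" using nbrs by (auto intro: finite_subset)
  ultimately show ?thesis using reg x by (cases "x = v") (simp_all add: regular_graph_def)
qed

lemma srw_prob_to_pendant:
  "x < n \<Longrightarrow> srw_prob {0..n} (ext_adj n v E) x n = (if x = v then 1 / (real d + 1) else 0)"
  using ext_degree[of x] reg by (auto simp: srw_prob_def ext_adj_def regular_graph_def)

lemma srw_prob_inside:
  "x < n \<Longrightarrow> y < n \<Longrightarrow> srw_prob {0..n} (ext_adj n v E) x y
     = (if x = v then real d / (real d + 1) else 1) * walk_kernel d E x y"
  using ext_degree[of x] d by (auto simp: srw_prob_def ext_adj_def walk_kernel_def)

(* Before hitting v', the walk on G is the walk on G_n killed with probability 1/(d+1)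
   at each visit of v; the final step v -> v' has probability 1/(d+1). *)
lemma first_hit_pendant:
  assumes u: "u < n"
  shows "first_hit {0..n} (srw_prob {0..n} (ext_adj n v E)) n (Suc k) u
           = discounted_reach (walk_kernel d E) n v (real d / (real d + 1)) k u / (real d + 1)"
  using u
proof (induct k arbitrary: u)
  case (Suc k)
  let ?p = "srw_prob {0..n} (ext_adj n v E)" and ?a = "real d / (real d + 1)"
  have "{0..n} - {n} = {..<n}" by auto
  hence "first_hit {0..n} ?p n (Suc (Suc k)) u = (\<Sum>x<n. ?p u x * first_hit {0..n} ?p n (Suc k) x)"
    by simp
  also have "\<dots> = (\<Sum>x<n. ((if u = v then ?a else 1) * walk_kernel d E u x)
                           * (discounted_reach (walk_kernel d E) n v ?a k x / (real d + 1)))"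
    using Suc by (intro sum.cong) (simp_all add: srw_prob_inside)
  also have "\<dots> = discounted_reach (walk_kernel d E) n v ?a (Suc k) u / (real d + 1)"
    by (simp add: sum_distrib_left sum_divide_distrib ac_simps)
  finally show ?case .
qed (simp add: srw_prob_to_pendant)

end


lemma geometric_sum_le:
  fixes r :: real assumes "0 \<le> r" "r < 1"
  shows "(\<Sum>s<k. r ^ s) \<le> 1 / (1 - r)"
  using assms by (simp add: sum_gp_strict divide_right_mono)

lemma renewal_sum_bound:
  fixes p q :: "nat \<Rightarrow> real" and r :: real
  assumes p: "\<And>s. 0 \<le> p s" "\<And>s. p s \<le> 1 / real n + r ^ s"
    and q: "\<And>s. 0 \<le> q s" "\<And>s. q s \<le> 1 / real n + r ^ s"
    and r: "0 \<le> r" "r < 1" and k: "k < n" "r ^ k \<le> 1 / (real n)\<^sup>2"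
  shows "(\<Sum>s<k. p s * q (k - s)) \<le> (2 + 2 / (1 - r)) / real n"
proof -
  have n: "real n > 0" using k by simp
  have reversed: "(\<Sum>s<k. r ^ (k - s)) \<le> (\<Sum>s<k. r ^ (k - Suc s))"
    using r by (intro sum_mono power_decreasing) auto
  also have "\<dots> = (\<Sum>s<k. r ^ s)" by (rule sum.nat_diff_reindex)
  finally have reversed: "(\<Sum>s<k. r ^ (k - s)) \<le> 1 / (1 - r)"
    using geometric_sum_le[OF r, of k] by linarith
  have "(\<Sum>s<k. p s * q (k - s)) \<le> (\<Sum>s<k. (1 / real n + r ^ s) * (1 / real n + r ^ (k - s)))"
    by (intro sum_mono mult_mono p q) (use r in auto)
  also have "\<dots> = real k / (real n)\<^sup>2 + (\<Sum>s<k. r ^ (k - s)) / real n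
                    + (\<Sum>s<k. r ^ s) / real n + real k * r ^ k"
    by (simp add: algebra_simps power2_eq_square sum.distrib sum_divide_distrib
        power_add[symmetric])
  also have "\<dots> \<le> 1 / real n + 1 / (1 - r) / real n + 1 / (1 - r) / real n + 1 / real n"
  proof -
    have "real k * r ^ k \<le> real n * (1 / (real n)\<^sup>2)" using k r by (intro mult_mono) auto
    hence "real k / (real n)\<^sup>2 \<le> 1 / real n" "real k * r ^ k \<le> 1 / real n"
      using k n by (simp_all add: field_simps power2_eq_square)
    moreover have "(\<Sum>s<k. r ^ (k - s)) / real n \<le> 1 / (1 - r) / real n"
      by (rule divide_right_mono[OF reversed]) simp
    moreover have "(\<Sum>s<k. r ^ s) / real n \<le> 1 / (1 - r) / real n"
      by (rule divide_right_mono[OF geometric_sum_le[OF r]]) simp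
    ultimately show ?thesis by linarith
  qed
  also have "\<dots> = (2 + 2 / (1 - r)) / real n" by (simp only: add_divide_distrib[symmetric]) simp
  finally show ?thesis .
qed

lemma first_hit_lower_bound:
  assumes reg: "regular_graph n d E" and d: "d > 0" and v: "v < n" and u: "u < n"
    and gap: "spectral_bound (trans_mat n d E) \<rho>" and r: "max \<rho> 0 < r" "r < 1"
    and n: "n \<ge> 2" and k: "k < n" "r ^ k \<le> 1 / (real n)\<^sup>2"
    and M: "4 * (2 + 2 / (1 - r)) \<le> real M + 1"
  shows "(real d / (real d + 1)) ^ M / (4 * (real d + 1)) / real n
           \<le> first_hit {0..n} (srw_prob {0..n} (ext_adj n v E)) n (Suc k) u"
proof -
  let ?P = "walk_kernel d E" and ?a = "real d / (real d + 1)"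
  let ?p = "\<lambda>x s. reach_prob ?P n v s x"
  have P: "?P x y \<ge> 0" for x y by (simp add: walk_kernel_def)
  have a: "0 < ?a" "?a \<le> 1" using d by auto
  have near: "\<bar>?p x s - 1 / real n\<bar> \<le> r ^ s" if "x < n" for x s
    using walk_mat_mixing[OF reg d _ gap r(1) that v] n
      reach_prob_mat_pow[OF walk_mat_carrier walk_mat_kernel[symmetric] v that] by simp
  have upper: "?p x s \<le> 1 / real n + r ^ s" if "x < n" for x s
    using near[OF that, of s] by linarith
  have nonneg: "0 \<le> ?p x s" for x s
    using reach_visits_nonneg[OF P] by (simp add: reach_visits_sum[symmetric] sum_nonneg)
  have "?p u k \<ge> 1 / real n - 1 / (real n)\<^sup>2" using near[OF u, of k] k by simp
  moreover have "1 / real n - 1 / (real n)\<^sup>2 \<ge> 1 / (2 * real n)"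
    using n by (simp add: field_simps power2_eq_square)
  moreover have "(\<Sum>s<k. ?p u s * ?p v (k - s)) / (real M + 1) \<le> 1 / (4 * real n)"
  proof -
    have "(\<Sum>s<k. ?p u s * ?p v (k - s)) \<le> (2 + 2 / (1 - r)) / real n"
      by (rule renewal_sum_bound) (use nonneg upper u v k r in auto)
    thus ?thesis using M n by (simp add: field_simps)
  qed
  ultimately have "1 / (4 * real n) \<le> ?p u k - (\<Sum>s<k. ?p u s * ?p v (k - s)) / (real M + 1)" by simp
  hence "?a ^ M * (1 / (4 * real n))
           \<le> ?a ^ M * (?p u k - (\<Sum>s<k. ?p u s * ?p v (k - s)) / (real M + 1))"
    by (rule mult_left_mono) (use a in simp)
  also have "\<dots> \<le> discounted_reach ?P n v ?a k u" by (rule discounted_reach_lower[OF P a])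
  finally have discounted: "?a ^ M * (1 / (4 * real n)) \<le> discounted_reach ?P n v ?a k u" .
  have "?a ^ M / (4 * (real d + 1)) / real n = ?a ^ M * (1 / (4 * real n)) / (real d + 1)"
    by (simp add: field_simps)
  also have "\<dots> \<le> discounted_reach ?P n v ?a k u / (real d + 1)"
    by (rule divide_right_mono[OF discounted]) simp
  also have "\<dots> = first_hit {0..n} (srw_prob {0..n} (ext_adj n v E)) n (Suc k) u"
    by (rule first_hit_pendant[OF reg d v u, symmetric])
  finally show ?thesis .
qed

lemma log_time_power_small:
  fixes r :: real
  assumes r: "1 / 2 \<le> r" "r < 1" and n: "n \<ge> 2" and t: "4 / (- ln r) * ln (real n) \<le> real t"
  shows "\<exists>k. t = Suc k \<and> r ^ k \<le> 1 / (real n)\<^sup>2"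
proof -
  define L where "L = 2 * ln (real n) / (- ln r)"
  have lnr: "0 < - ln r" "- ln r \<le> ln 2"
    using r ln_le_cancel_iff[of "1/2" r] by (auto simp: ln_div)
  have "ln 2 \<le> ln (real n)" using n by simp
  hence L: "1 \<le> L" using lnr unfolding L_def by (simp add: field_simps)
  have "2 * L \<le> real t" using t unfolding L_def by (simp add: field_simps)
  then obtain k where tk: "t = Suc k" and kL: "L \<le> real k" using L by (cases t) auto
  have "r ^ k = exp (real k * ln r)" using r by (simp add: exp_ln ln_realpow[symmetric])
  also have "\<dots> \<le> exp (L * ln r)" using kL lnr by (simp add: mult_right_mono_neg)
  also have "L * ln r = - ln ((real n)\<^sup>2)" using lnr n by (simp add: L_def ln_realpow)
  also have "exp (- ln ((real n)\<^sup>2)) = 1 / (real n)\<^sup>2"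
    using n by (simp add: exp_minus inverse_eq_divide)
  finally show ?thesis using tk by blast
qed

(* The theorem: take r halfway between max rho 0 and 1, C = 4 / (- ln r), N = 2, and
   c = a^M / (4 (d + 1)) with M large enough for first_hit_lower_bound. *)
theorem lemma3p3:
  fixes d :: nat and \<rho> :: real
  assumes "d \<ge> 3" and "\<rho> < 1"
  shows "\<exists>C c. C > 0 \<and> c > 0 \<and> (\<exists>N. \<forall>n \<ge> N. \<forall>E v.
           regular_graph n d E \<and> spectral_bound (trans_mat n d E) \<rho> \<and> v < n \<longrightarrow>
           (\<forall>t u. C * ln (real n) \<le> real t \<and> t \<le> n \<and> u < n \<longrightarrow>
              first_hit {0..n} (srw_prob {0..n} (ext_adj n v E)) n t u \<ge> c / real n))"
proof -
  define r where "r = (1 + max \<rho> 0) / 2"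
  have r: "max \<rho> 0 < r" "r < 1" "1 / 2 \<le> r" using assms(2) by (auto simp: r_def)
  define M where "M = nat \<lceil>4 * (2 + 2 / (1 - r))\<rceil>"
  have M: "4 * (2 + 2 / (1 - r)) \<le> real M + 1" unfolding M_def by linarith
  define c where "c = (real d / (real d + 1)) ^ M / (4 * (real d + 1))"
  have C: "4 / (- ln r) > 0" using r by simp
  have c: "c > 0" using assms(1) by (simp add: c_def)
  have "c / real n \<le> first_hit {0..n} (srw_prob {0..n} (ext_adj n v E)) n t u"
    if n: "n \<ge> 2" and G: "regular_graph n d E" "spectral_bound (trans_mat n d E) \<rho>" "v < n"
      and t: "4 / (- ln r) * ln (real n) \<le> real t" "t \<le> n" and u: "u < n" for n E v t u
  proof -
    obtain k where "t = Suc k" "r ^ k \<le> 1 / (real n)\<^sup>2"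
      using log_time_power_small[OF r(3,2) n t(1)] by blast
    thus ?thesis using first_hit_lower_bound[OF G(1) _ G(3) u G(2) r(1,2) n _ _ M] t(2) assms(1)
      by (simp add: c_def)
  qed
  thus ?thesis using C c by blast
qed

end
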